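(* In the setting of the Pairwise Learning algorithm described in the context, suppose that every $1$-dimensional reduced graph of $G$ contains exactly one source component and that for every $\theta\neq\theta^*$ and every $1$-dimensional reduced graph $\mathcal{H}_1$ with source component $\mathcal{S}_{\mathcal{H}_1}$, $\sum_{j\in\mathcal{S}_{\mathcal{H}_1}}D(\ell_j(\cdot\mid\theta^* )\|\ell_j(\cdot\mid\theta))\neq0$. Let $i$ be a non-faulty agent. If there exists $\tilde\theta\in\Theta$ such that for every $\theta\neq\tilde\theta$, $r_t^i(\tilde\theta,\theta)\to+\infty$ almost surely and $r_t^i(\theta,\tilde\theta)\to-\infty$ almost surely, then $\tilde\theta=\theta^*$.
   Context: Network: $n$ agents on a directed graph $G=(\mathcal{V},\mathcal{E})$, $\mathcal{V}=\{1,\dots,n\}$, $\mathcal{I}_i$ the incoming neighbors of $i$; synchronous iterations; an unknown set of at most $f$ Byzantine agents behaving arbitrarily; non-faulty agents know $f$; missing messages are replaced by a default value. Observations: $\Theta=\{\theta_1,\dots,\theta_m\}$ with unknown true state $\theta^*$; agent $i$ has finite signal space $\mathcal{S}_i$ and likelihoods $\ell_i(\cdot\mid\theta)$ with full support; in iteration $t$ it observes $s_t^i\sim\ell_i(\cdot\mid\theta^* )$, independently across agents and iterations; $\ell_i(s_{1,t}^i\mid\theta)=\prod_{r=1}^t\ell_i(s_r^i\mid\theta)$. $D$ is the Kullback–Leibler divergence. A $1$-dimensional reduced graph of $G$ is obtained by removing all faulty nodes and incident links and then, for each non-faulty node, up to $f$ additional incoming links; a source component is a strongly connected component with no incoming links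 from outside. Pairwise Learning at non-faulty agent $i$: $r_0^i(\theta_1,\theta_2)=0$ for all ordered pairs $\theta_1\ne\theta_2$; in iteration $t\ge1$, for each ordered pair, transmit $r_{t-1}^i(\theta_1,\theta_2)$, observe $s_t^i$, receive $\tilde r_{t-1}^j(\theta_1,\theta_2)$ from all $j\in\mathcal{I}_i$, discard the $f$ smallest and $f$ largest received values (remaining index set $\mathcal{I}_i^*[t]$), and set $r_t^i(\theta_1,\theta_2)=\frac{\sum_{j\in\mathcal{I}_i^*[t]}\tilde r_{t-1}^j(\theta_1,\theta_2)+r_{t-1}^i(\theta_1,\theta_2)}{|\mathcal{I}_i^*[t]|+1}+\log\frac{\ell_i(s_{1,t}^i\mid\theta_1)}{\ell_i(s_{1,t}^i\mid\theta_2)}$. *)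

theory Defs
  imports "HOL-Probability.Probability"
begin

definition incoming :: "('v \<times> 'v) set \<Rightarrow> 'v \<Rightarrow> 'v set" where
  "incoming E i = {j. (j, i) \<in> E \<and> j \<noteq> i}"

definition trim_sum :: "nat \<Rightarrow> real multiset \<Rightarrow> real" where
  "trim_sum f A = sum_list (take (size A - 2 * f) (drop f (sorted_list_of_multiset A)))"

(* Pairwise Learning state r_t^i(theta1,theta2)(omega).
   F: Byzantine agents; adv t j i th1 th2 w: the (arbitrary) value that faulty agent j
   sends to agent i in iteration t for the pair (th1,th2);
   lik i s th = ell_i(s | th); sig t i w = s_t^i. *)
primrec PL :: "('v \<times> 'v) set \<Rightarrow> 'v set \<Rightarrow> nat \<Rightarrow>
      (nat \<Rightarrow> 'v \<Rightarrow> 'v \<Rightarrow> 'th \<Rightarrow> 'th \<Rightarrow> 'w \<Rightarrow> real) \<Rightarrow>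
      ('v \<Rightarrow> 's \<Rightarrow> 'th \<Rightarrow> real) \<Rightarrow> (nat \<Rightarrow> 'v \<Rightarrow> 'w \<Rightarrow> 's) \<Rightarrow>
      nat \<Rightarrow> 'v \<Rightarrow> 'th \<Rightarrow> 'th \<Rightarrow> 'w \<Rightarrow> real" where
  "PL E F f adv lik sig 0 = (\<lambda>i th1 th2 w. 0)"
| "PL E F f adv lik sig (Suc t) = (\<lambda>i th1 th2 w.
     (let A = image_mset (\<lambda>j. if j \<in> F then adv (Suc t) j i th1 th2 w
                               else PL E F f adv lik sig t j th1 th2 w)
                         (mset_set (incoming E i))
      in (trim_sum f A + PL E F f adv lik sig t i th1 th2 w) / (real (size A - 2 * f) + 1)
         + ln ((\<Prod>r\<in>{1..Suc t}. lik i (sig r i w) th1) / (\<Prod>r\<in>{1..Suc t}. lik i (sig r i w) th2))))"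

definition reduced_graph1 :: "'v set \<Rightarrow> ('v \<times> 'v) set \<Rightarrow> 'v set \<Rightarrow> nat \<Rightarrow> ('v \<times> 'v) set \<Rightarrow> bool" where
  "reduced_graph1 V E F f H \<longleftrightarrow>
     H \<subseteq> {(j, i). (j, i) \<in> E \<and> j \<noteq> i \<and> j \<in> V - F \<and> i \<in> V - F} \<and>
     (\<forall>i\<in>V - F. card {j. (j, i) \<in> E \<and> j \<noteq> i \<and> j \<in> V - F \<and> (j, i) \<notin> H} \<le> f)"

definition source_component :: "'v set \<Rightarrow> ('v \<times> 'v) set \<Rightarrow> 'v set \<Rightarrow> bool" where
  "source_component W H C \<longleftrightarrow>
     C \<noteq> {} \<and> C \<subseteq> W \<and>
     (\<forall>x\<in>C. \<forall>y\<in>C. (x, y) \<in> H\<^sup>*) \<and>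
     (\<forall>x\<in>C. \<forall>y\<in>W. (x, y) \<in> H\<^sup>* \<and> (y, x) \<in> H\<^sup>* \<longrightarrow> y \<in> C) \<and>
     (\<forall>j i. (j, i) \<in> H \<and> i \<in> C \<longrightarrow> j \<in> C)"

definition KL :: "'s set \<Rightarrow> ('s \<Rightarrow> real) \<Rightarrow> ('s \<Rightarrow> real) \<Rightarrow> real" where
  "KL S p q = (\<Sum>s\<in>S. p s * ln (p s / q s))"

end

theory Submission
  imports Defs
begin

text \<open>Suppose \<open>thtilde \<noteq> thstar\<close>. For a non-faulty agent \<open>j\<close>, the cumulative log-likelihood ratio of
  \<open>thtilde\<close> against \<open>thstar\<close> is a sum of independent bounded increments with mean
  \<open>-D(\<ell>\<^sub>j(\<cdot>|thstar) \<parallel> \<ell>\<^sub>j(\<cdot>|thtilde)) < 0\<close>, or identically zero when the two likelihoods agree;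
  by Hoeffding's inequality and Borel-Cantelli it is almost surely eventually nonpositive.
  Since at most \<open>f\<close> received values come from faulty agents, the trimmed mean computed by a
  non-faulty agent never exceeds the largest non-faulty state. Hence, once all these
  log-likelihood terms are nonpositive, \<open>max\<^sub>j r\<^sub>t\<^sup>j(thtilde, thstar)\<close> over non-faulty \<open>j\<close> stops growing,
  contradicting \<open>r\<^sub>t\<^sup>i(thtilde, thstar) \<rightarrow> +\<infinity>\<close>.\<close>

lemma (in prob_space) indep_sets_reindex:
  assumes ind: "indep_sets F (g ` I)" and inj: "inj_on g I"
  shows "indep_sets (\<lambda>i. F (g i)) I"
  unfolding indep_sets_def
proof (intro conjI ballI allI impI)
  fix i assume "i \<in> I"
  then show "F (g i) \<subseteq> events" using ind unfolding indep_sets_def by auto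
next
  fix J A assume J: "J \<subseteq> I" "J \<noteq> {}" "finite J" and A: "A \<in> Pi J (\<lambda>i. F (g i))"
  define A' where "A' = (\<lambda>x. A (inv_into J g x))"
  have injJ: "inj_on g J" using inj J by (meson inj_on_subset)
  have A'g: "A' (g j) = A j" if "j \<in> J" for j using that injJ by (simp add: A'_def)
  have "A' \<in> Pi (g ` J) F" using A A'g by auto
  moreover have "g ` J \<subseteq> g ` I" "g ` J \<noteq> {}" "finite (g ` J)" using J by auto
  ultimately have "prob (\<Inter>j\<in>g ` J. A' j) = (\<Prod>j\<in>g ` J. prob (A' j))"
    using ind unfolding indep_sets_def by blast
  then show "prob (\<Inter>j\<in>J. A j) = (\<Prod>j\<in>J. prob (A j))"
    using A'g injJ by (simp add: prod.reindex)
qed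

lemma (in prob_space) indep_vars_reindex:
  assumes "indep_vars M' X (g ` I)" and "inj_on g I"
  shows "indep_vars (\<lambda>i. M' (g i)) (\<lambda>i. X (g i)) I"
  using assms unfolding indep_vars_def2 by (auto intro: indep_sets_reindex)

lemma (in prob_space) expectation_count_space_fun:
  assumes S: "finite S" and Y: "Y \<in> measurable M (count_space S)"
  shows "expectation (\<lambda>w. g (Y w)) = (\<Sum>s\<in>S. g s * prob {w \<in> space M. Y w = s})"
proof -
  have sets: "{w \<in> space M. Y w = s} \<in> events" if "s \<in> S" for s
    using measurable_sets[OF Y, of "{s}"] that by (simp add: vimage_def Int_def conj_commute)
  have "expectation (\<lambda>w. g (Y w)) = expectation (\<lambda>w. \<Sum>s\<in>S. g s * indicator {w \<in> space M. Y w = s} w)"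
    using measurable_space[OF Y] S
    by (intro Bochner_Integration.integral_cong) (auto simp: indicator_def if_distrib sum.delta cong: if_cong)
  also have "\<dots> = (\<Sum>s\<in>S. g s * prob {w \<in> space M. Y w = s})"
    using sets by (subst Bochner_Integration.integral_sum) (auto simp: emeasure_eq_measure)
  finally show ?thesis .
qed

lemma KL_pos:
  assumes S: "finite S" and p: "\<And>s. s \<in> S \<Longrightarrow> p s > 0" and q: "\<And>s. s \<in> S \<Longrightarrow> q s > 0"
    and sum_p: "(\<Sum>s\<in>S. p s) = 1" and sum_q: "(\<Sum>s\<in>S. q s) = 1"
    and differ: "s0 \<in> S" "p s0 \<noteq> q s0"
  shows "KL S p q > 0"
proof -
  have term_eq: "p s * ln (p s / q s) = - (p s * (ln (q s) - ln (p s)))" if "s \<in> S" for s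
    using p[OF that] q[OF that] by (simp add: ln_divide_pos algebra_simps)
  have "(\<Sum>s\<in>S. p s - q s) < KL S p q"
    unfolding KL_def
  proof (rule sum_strict_mono_ex1[OF S])
    show "\<forall>s\<in>S. p s - q s \<le> p s * ln (p s / q s)"
      using ln_diff_le p q term_eq by (force simp: field_simps)
    show "\<exists>s\<in>S. p s - q s < p s * ln (p s / q s)"
      using ln_diff_less[of "q s0" "p s0"] p q term_eq differ by (force simp: field_simps)
  qed
  then show ?thesis using sum_p sum_q by (simp add: sum_subtractf)
qed

lemma (in prob_space) AE_eventually_partial_sums_nonpos:
  fixes X :: "nat \<Rightarrow> 'a \<Rightarrow> real"
  assumes indep: "indep_vars (\<lambda>_. borel) X {1..}"
    and bounded: "\<And>t w. t \<ge> 1 \<Longrightarrow> w \<in> space M \<Longrightarrow> \<bar>X t w\<bar> \<le> C"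
    and mean: "\<And>t. t \<ge> 1 \<Longrightarrow> expectation (X t) = \<mu>" and neg: "\<mu> < 0"
  shows "AE w in M. eventually (\<lambda>t. (\<Sum>r\<in>{1..t}. X r w) \<le> 0) sequentially"
proof -
  define D where "D = \<bar>C\<bar> + 1"
  define c where "c = \<mu>\<^sup>2 / (2 * D\<^sup>2)"
  define A where "A t = {w \<in> space M. 0 \<le> (\<Sum>r\<in>{1..t}. X r w)}" for t
  have D: "D > 0" and c: "c > 0" using neg by (simp_all add: D_def c_def)
  have X_rv: "random_variable borel (X t)" if "t \<ge> 1" for t
    using indep that unfolding indep_vars_def by auto
  have A_events: "A t \<in> events" for t
    unfolding A_def using X_rv by measurable
  \<comment> \<open>Hoeffding: the sum must exceed its mean \<open>t \<mu>\<close> by \<open>t |\<mu>|\<close>.\<close>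
  have prob_A: "prob (A t) \<le> exp (- c) ^ t" for t
  proof (cases "t = 0")
    case False
    interpret Hoeffding_ineq M "{1..t}" X "\<lambda>_. - D" "\<lambda>_. D" "real t * \<mu>"
    proof unfold_locales
      show "indep_vars (\<lambda>_. borel) X {1..t}" using indep by (rule indep_vars_subset) auto
      show "AE w in M. X r w \<in> {- D..D}" if "r \<in> {1..t}" for r
        using bounded that by (intro AE_I2) (force simp: D_def abs_le_iff)
      show "real t * \<mu> \<equiv> (\<Sum>r\<in>{1..t}. expectation (X r))" using mean by simp
    qed simp
    have "prob (A t) \<le> exp (-2 * (- real t * \<mu>)\<^sup>2 / (\<Sum>r\<in>{1..t}. (D - - D)\<^sup>2))"
      using Hoeffding_ineq_ge[of "- real t * \<mu>"] neg D False
      by (simp add: A_def mult_nonneg_nonpos)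
    also have "\<dots> = exp (- c) ^ t"
      using False D by (simp add: c_def power2_eq_square field_simps flip: exp_of_nat_mult)
    finally show ?thesis .
  qed simp
  have "summable (\<lambda>t. prob (A t))"
    by (rule summable_comparison_test'[OF summable_geometric[of "exp (- c)"]]) (use c prob_A in auto)
  then have "AE w in M. eventually (\<lambda>t. w \<in> space M - A t) sequentially"
    using A_events by (intro borel_cantelli_AE1) (auto simp: emeasure_eq_measure)
  then show ?thesis
    by (rule AE_mp) (auto intro!: AE_I2 elim: eventually_mono simp: A_def)
qed

lemma ln_prod_ratio:
  fixes a b :: "'i \<Rightarrow> real"
  assumes "\<And>r. r \<in> R \<Longrightarrow> a r > 0" "\<And>r. r \<in> R \<Longrightarrow> b r > 0"
  shows "ln ((\<Prod>r\<in>R. a r) / (\<Prod>r\<in>R. b r)) = (\<Sum>r\<in>R. ln (a r / b r))"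
proof -
  have "a r / b r \<noteq> 0" if "r \<in> R" for r
    using assms[OF that] by simp
  then show ?thesis by (cases "finite R") (simp_all add: ln_prod flip: prod_dividef)
qed

lemma (in prob_space) AE_eventually_log_likelihood_ratio_nonpos:
  fixes Y :: "nat \<Rightarrow> 'a \<Rightarrow> 's"
  assumes S: "finite S" and p: "\<And>s. s \<in> S \<Longrightarrow> p s > 0" and q: "\<And>s. s \<in> S \<Longrightarrow> q s > 0"
    and sum_p: "(\<Sum>s\<in>S. p s) = 1" and sum_q: "(\<Sum>s\<in>S. q s) = 1"
    and Y: "\<And>t. t \<ge> 1 \<Longrightarrow> Y t \<in> measurable M (count_space S)"
    and indep: "indep_vars (\<lambda>_. count_space S) Y {1..}"
    and distr: "\<And>t s. t \<ge> 1 \<Longrightarrow> s \<in> S \<Longrightarrow> prob {w \<in> space M. Y t w = s} = p s"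
  shows "AE w in M. eventually (\<lambda>t. ln ((\<Prod>r\<in>{1..t}. q (Y r w)) / (\<Prod>r\<in>{1..t}. p (Y r w))) \<le> 0)
                        sequentially"
proof -
  have Y_in: "Y r w \<in> S" if "r \<ge> 1" "w \<in> space M" for r w
    using measurable_space[OF Y that(2)] that(1) by simp
  have "ln ((\<Prod>r\<in>{1..t}. q (Y r w)) / (\<Prod>r\<in>{1..t}. p (Y r w)))
          = (\<Sum>r\<in>{1..t}. ln (q (Y r w) / p (Y r w)))" if "w \<in> space M" for t w
    using Y_in that p q by (intro ln_prod_ratio) auto
  moreover have "AE w in M. eventually (\<lambda>t. (\<Sum>r\<in>{1..t}. ln (q (Y r w) / p (Y r w))) \<le> 0) sequentially"
  proof (cases "\<forall>s\<in>S. q s = p s")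
    case True
    then show ?thesis
      using Y_in p by (intro AE_I2 always_eventually allI) (simp add: sum.neutral)
  next
    case False
    then obtain s0 where s0: "s0 \<in> S" "p s0 \<noteq> q s0" by auto
    define g where "g s = ln (q s / p s)" for s
    have "expectation (\<lambda>w. g (Y t w)) = - KL S p q" if "t \<ge> 1" for t
    proof -
      have "expectation (\<lambda>w. g (Y t w)) = (\<Sum>s\<in>S. g s * p s)"
        using expectation_count_space_fun[OF S Y[OF that]] distr[OF that] by simp
      also have "\<dots> = - KL S p q"
        unfolding KL_def g_def using p q
        by (simp add: sum_negf[symmetric] ln_divide_pos algebra_simps cong: sum.cong)
      finally show ?thesis .
    qed
    moreover have "\<bar>g (Y t w)\<bar> \<le> (\<Sum>s\<in>S. \<bar>g s\<bar>)" if "t \<ge> 1" "w \<in> space M" for t w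
      using Y_in that S by (intro member_le_sum) auto
    moreover have "indep_vars (\<lambda>_. borel) (\<lambda>t w. g (Y t w)) {1..}"
      using indep by (rule indep_vars_compose2) simp
    ultimately show ?thesis
      using KL_pos[OF S p q sum_p sum_q s0]
      by (intro AE_eventually_partial_sums_nonpos[of _ "\<Sum>s\<in>S. \<bar>g s\<bar>" "- KL S p q", unfolded g_def])
         (auto simp: g_def)
  qed
  ultimately show ?thesis
    by (auto elim: AE_mp)
qed

lemma sorted_nth_le_if_few_greater:
  fixes xs :: "'a::linorder list"
  assumes sorted: "sorted xs" and few: "length (filter (\<lambda>x. m < x) xs) \<le> f"
    and q: "q + f < length xs"
  shows "xs ! q \<le> m"
proof (rule ccontr)
  assume "\<not> xs ! q \<le> m"
  then have "\<forall>y\<in>set (drop q xs). m < y"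
  proof (intro ballI)
    fix y assume "y \<in> set (drop q xs)"
    then obtain k where "k < length xs - q" "y = xs ! (q + k)"
      by (auto simp: in_set_conv_nth)
    with sorted q \<open>\<not> xs ! q \<le> m\<close> show "m < y"
      using sorted_nth_mono[of xs q "q + k"] by (auto simp: not_le intro: less_le_trans)
  qed
  then have "length (drop q xs) \<le> length (filter (\<lambda>x. m < x) xs)"
    by (metis append_take_drop_id filter_True filter_append length_append le_add2)
  with few q show False by simp
qed

lemma trim_sum_le:
  fixes A :: "real multiset"
  assumes few: "size (filter_mset (\<lambda>x. m < x) A) \<le> f"
  shows "trim_sum f A \<le> real (size A - 2 * f) * m"
proof -
  define xs where "xs = sorted_list_of_multiset A"
  have len: "length xs = size A" and few_xs: "length (filter (\<lambda>x. m < x) xs) \<le> f"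
    using few by (simp_all add: xs_def flip: size_mset)
  have "trim_sum f A = (\<Sum>p<size A - 2 * f. xs ! (f + p))"
    using len by (simp add: trim_sum_def xs_def sum_list_sum_nth atLeast0LessThan)
  also have "\<dots> \<le> real (size A - 2 * f) * m"
    using sum_bounded_above[of "{..<size A - 2 * f}" "\<lambda>p. xs ! (f + p)" m]
          sorted_nth_le_if_few_greater[OF _ few_xs] len
    by (simp add: xs_def)
  finally show ?thesis .
qed

lemma PL_Suc_le:
  assumes V: "finite V" "E \<subseteq> V \<times> V" and F: "F \<subseteq> V" "card F \<le> f" and j: "j \<in> V - F"
    and bound: "\<And>k. k \<in> V - F \<Longrightarrow> PL E F f adv lik sig t k \<theta> \<theta>' w \<le> m"
  shows "PL E F f adv lik sig (Suc t) j \<theta> \<theta>' w \<le> m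
           + ln ((\<Prod>r\<in>{1..Suc t}. lik j (sig r j w) \<theta>) / (\<Prod>r\<in>{1..Suc t}. lik j (sig r j w) \<theta>'))"
proof -
  define h where "h = (\<lambda>k. if k \<in> F then adv (Suc t) k j \<theta> \<theta>' w else PL E F f adv lik sig t k \<theta> \<theta>' w)"
  define A where "A = image_mset h (mset_set (incoming E j))"
  define n where "n = real (size A - 2 * f)"
  have incoming_fin: "finite (incoming E j)" and incoming_sub: "incoming E j \<subseteq> V"
    using V by (auto simp: incoming_def intro: finite_subset)
  \<comment> \<open>Only faulty neighbours can send a value above the bound of the non-faulty states.\<close>
  have "{k \<in> incoming E j. m < h k} \<subseteq> F"
    using bound incoming_sub by (auto simp: h_def not_le[symmetric])
  then have "card {k \<in> incoming E j. m < h k} \<le> f"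
    using F finite_subset[OF F(1) V(1)] by (meson card_mono order_trans)
  then have "size (filter_mset (\<lambda>x. m < x) A) \<le> f"
    using incoming_fin by (simp add: A_def filter_mset_image_mset)
  then have "trim_sum f A + PL E F f adv lik sig t j \<theta> \<theta>' w \<le> n * m + m"
    using trim_sum_le bound[OF j] unfolding n_def by (meson add_mono)
  then have "(trim_sum f A + PL E F f adv lik sig t j \<theta> \<theta>' w) / (n + 1) \<le> m"
    by (simp add: n_def field_simps)
  then show ?thesis
    by (simp add: A_def h_def n_def Let_def)
qed

lemma PL_not_tendsto_at_top:
  assumes V: "finite V" "E \<subseteq> V \<times> V" and F: "F \<subseteq> V" "card F \<le> f" and i: "i \<in> V - F"
    and nonpos: "\<forall>j\<in>V - F. eventually (\<lambda>t. ln ((\<Prod>r\<in>{1..t}. lik j (sig r j w) \<theta>)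
                                               / (\<Prod>r\<in>{1..t}. lik j (sig r j w) \<theta>')) \<le> 0) sequentially"
  shows "\<not> filterlim (\<lambda>t. PL E F f adv lik sig t i \<theta> \<theta>' w) at_top sequentially"
proof
  let ?r = "\<lambda>t j. PL E F f adv lik sig t j \<theta> \<theta>' w"
  have fin: "finite (V - F)" using V by simp
  obtain T where T: "\<And>t j. t \<ge> T \<Longrightarrow> j \<in> V - F \<Longrightarrow>
      ln ((\<Prod>r\<in>{1..t}. lik j (sig r j w) \<theta>) / (\<Prod>r\<in>{1..t}. lik j (sig r j w) \<theta>')) \<le> 0"
    using eventually_ball_finite[OF fin nonpos] by (auto simp: eventually_sequentially)
  define B where "B = Max ((\<lambda>j. ?r T j) ` (V - F))"
  have bounded: "\<forall>j\<in>V - F. ?r t j \<le> B" if "t \<ge> T" for t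
    using that
  proof (induction t rule: dec_induct)
    case base
    show ?case using fin by (auto simp: B_def)
  next
    case (step t)
    show ?case
    proof
      fix j assume j: "j \<in> V - F"
      have "?r (Suc t) j \<le> B + ln ((\<Prod>r\<in>{1..Suc t}. lik j (sig r j w) \<theta>)
                                     / (\<Prod>r\<in>{1..Suc t}. lik j (sig r j w) \<theta>'))"
        using step.IH by (intro PL_Suc_le[OF V F j]) auto
      with T[of "Suc t" j] step.hyps j show "?r (Suc t) j \<le> B" by simp
    qed
  qed
  assume "filterlim (\<lambda>t. ?r t i) at_top sequentially"
  then obtain N where "\<And>t. t \<ge> N \<Longrightarrow> B + 1 \<le> ?r t i"
    by (auto simp: filterlim_at_top eventually_sequentially)
  then have "B + 1 \<le> ?r (max T N) i" by simp
  moreover have "?r (max T N) i \<le> B" using bounded[of "max T N"] i by simp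
  ultimately show False by simp
qed

theorem proposition1:
  fixes V :: "'v set" and E :: "('v \<times> 'v) set" and F :: "'v set" and f :: nat
    and Theta :: "'th set" and thstar :: 'th
    and S :: "'v \<Rightarrow> 's set" and lik :: "'v \<Rightarrow> 's \<Rightarrow> 'th \<Rightarrow> real"
    and M :: "'w measure" and sig :: "nat \<Rightarrow> 'v \<Rightarrow> 'w \<Rightarrow> 's"
    and adv :: "nat \<Rightarrow> 'v \<Rightarrow> 'v \<Rightarrow> 'th \<Rightarrow> 'th \<Rightarrow> 'w \<Rightarrow> real"
    and i :: 'v and thtilde :: 'th
  assumes V_fin: "finite V"
    and E_sub: "E \<subseteq> V \<times> V"
    and F_sub: "F \<subseteq> V" and F_card: "card F \<le> f"
    and Theta_fin: "finite Theta" and thstar_in: "thstar \<in> Theta"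
    and S_fin: "\<And>j. j \<in> V \<Longrightarrow> finite (S j)"
    and S_ne: "\<And>j. j \<in> V \<Longrightarrow> S j \<noteq> {}"
    and lik_pos: "\<And>j s th. j \<in> V \<Longrightarrow> s \<in> S j \<Longrightarrow> th \<in> Theta \<Longrightarrow> lik j s th > 0"
    and lik_sum: "\<And>j th. j \<in> V \<Longrightarrow> th \<in> Theta \<Longrightarrow> (\<Sum>s\<in>S j. lik j s th) = 1"
    and M_prob: "prob_space M"
    and sig_meas: "\<And>t j. t \<ge> 1 \<Longrightarrow> j \<in> V \<Longrightarrow> sig t j \<in> measurable M (count_space (S j))"
    and sig_indep: "prob_space.indep_vars M (\<lambda>(t, j). count_space (S j)) (\<lambda>(t, j). sig t j)
                      ({1..} \<times> V)"
    and sig_distr: "\<And>t j s. t \<ge> 1 \<Longrightarrow> j \<in> V \<Longrightarrow> s \<in> S j \<Longrightarrow>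
                      measure M {w \<in> space M. sig t j w = s} = lik j s thstar"
    and one_source: "\<And>H. reduced_graph1 V E F f H \<Longrightarrow> \<exists>!C. source_component (V - F) H C"
    and identif: "\<And>th H C. th \<in> Theta \<Longrightarrow> th \<noteq> thstar \<Longrightarrow> reduced_graph1 V E F f H \<Longrightarrow>
                      source_component (V - F) H C \<Longrightarrow>
                      (\<Sum>j\<in>C. KL (S j) (\<lambda>s. lik j s thstar) (\<lambda>s. lik j s th)) \<noteq> 0"
    and i_nonfaulty: "i \<in> V - F"
    and thtilde_in: "thtilde \<in> Theta"
    and conv: "\<And>th. th \<in> Theta \<Longrightarrow> th \<noteq> thtilde \<Longrightarrow>
                 (AE w in M. filterlim (\<lambda>t. PL E F f adv lik sig t i thtilde th w) at_top sequentially) \<and>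
                 (AE w in M. filterlim (\<lambda>t. PL E F f adv lik sig t i th thtilde w) at_bot sequentially)"
  shows "thtilde = thstar"
proof (rule ccontr)
  assume ne: "thtilde \<noteq> thstar"
  interpret prob_space M by (rule M_prob)
  let ?ratio = "\<lambda>j t w. (\<Prod>r\<in>{1..t}. lik j (sig r j w) thtilde) / (\<Prod>r\<in>{1..t}. lik j (sig r j w) thstar)"
  have "AE w in M. eventually (\<lambda>t. ln (?ratio j t w) \<le> 0) sequentially" if j: "j \<in> V - F" for j
  proof -
    have "indep_vars (\<lambda>(t, j). count_space (S j)) (\<lambda>(t, j). sig t j) ((\<lambda>r. (r, j)) ` {1..})"
      using sig_indep by (rule indep_vars_subset) (use j in auto)
    from indep_vars_reindex[OF this]
    have "indep_vars (\<lambda>_. count_space (S j)) (\<lambda>r. sig r j) {1..}"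
      by (simp add: inj_on_def)
    then show ?thesis
      using j thtilde_in thstar_in
      by (intro AE_eventually_log_likelihood_ratio_nonpos[where Y = "\<lambda>r. sig r j"
            and p = "\<lambda>s. lik j s thstar" and q = "\<lambda>s. lik j s thtilde" and S = "S j"])
         (auto intro: S_fin lik_pos lik_sum sig_meas sig_distr)
  qed
  then have "AE w in M. \<forall>j\<in>V - F. eventually (\<lambda>t. ln (?ratio j t w) \<le> 0) sequentially"
    using V_fin by (intro AE_finite_allI) auto
  moreover have "AE w in M. filterlim (\<lambda>t. PL E F f adv lik sig t i thtilde thstar w) at_top sequentially"
    using conv[OF thstar_in ne[symmetric]] by simp
  ultimately have "AE w in M. False"
  proof eventually_elim
    case (elim w)
    with PL_not_tendsto_at_top[OF V_fin E_sub F_sub F_card i_nonfaulty, where lik = lik and sig = sig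
           and w = w and \<theta> = thtilde and \<theta>' = thstar and adv = adv]
    show False by simp
  qed
  then show False by simp
qed

end
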